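(* Let $L:G\to\mathcal{L}$ be a labeling function on a finite abelian group $G$. If $L$ is $3$-friendly, then $L$ is friendly, i.e. $m$-friendly for every $m\ge 3$.
   Context: Let $G$ be a finite abelian group written additively, $\mathcal{L}$ a finite set, and $L:G\to\mathcal{L}$ any function. For $m\ge3$ let $Z_m=\{(g_1,\dots,g_m)\in G^m: g_1+\cdots+g_{m-1}=g_m\}$, let $\widetilde{L}:Z_m\to\mathcal{L}^m$ be $\widetilde L(g_1,\dots,g_m)=(L(g_1),\dots,L(g_m))$, and let $\pi_i:G^m\to G$ be the $i$-th coordinate projection. $L$ is called $m$-friendly if for every $l=(l_1,\dots,l_m)\in\widetilde{L}(Z_m)$ and every $i=1,\dots,m$ one has $\pi_i(\widetilde{L}^{-1}(l))=L^{-1}(l_i)$. $L$ is friendly if it is $m$-friendly for all $m\ge3$. *)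

theory Defs
  imports Main
begin

text \<open>Tuples (g_1,...,g_m) are lists of length m; coordinate i (1-based in the paper)
 is list index i-1.\<close>

definition Zset :: "nat \<Rightarrow> ('a::ab_group_add) list set" where
  "Zset m = {gs. length gs = m \<and> sum_list (take (m - 1) gs) = gs ! (m - 1)}"

definition Ltilde :: "('a \<Rightarrow> 'l) \<Rightarrow> 'a list \<Rightarrow> 'l list" where
  "Ltilde L gs = map L gs"

definition m_friendly :: "nat \<Rightarrow> (('a::ab_group_add) \<Rightarrow> 'l) \<Rightarrow> bool" where
  "m_friendly m L \<longleftrightarrow>
     (\<forall>l \<in> Ltilde L ` Zset m. \<forall>i < m.
        (\<lambda>gs. gs ! i) ` {gs \<in> Zset m. Ltilde L gs = l} = L -` {l ! i})"

definition friendly :: "(('a::ab_group_add) \<Rightarrow> 'l) \<Rightarrow> bool" where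
  "friendly L \<longleftrightarrow> (\<forall>m \<ge> 3. m_friendly m L)"

end

theory Submission
  imports Defs
begin

text \<open>An element of \<open>Z\<^sub>n\<^sub>+\<^sub>1\<close> is a free tuple \<open>xs\<close> of length \<open>n\<close> followed by its sum, and
  \<open>(n + 1)\<close>-friendliness says that any one entry, the sum included, can be changed to any element
  with the same label by re-choosing the other entries within their labels. For a tuple
  \<open>xs @ [b]\<close>, whose sum is \<open>sum_list xs + b\<close>, a change of an entry of \<open>xs\<close>, of \<open>b\<close> or of the sum is
  achieved by one application of 3-friendliness to the pair \<open>(sum_list xs, b)\<close> and one application
  of the induction hypothesis to \<open>xs\<close>.\<close>

abbreviation with_sum :: "'a::monoid_add list \<Rightarrow> 'a list" where
  "with_sum xs \<equiv> xs @ [sum_list xs]"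

definition liftable_at :: "('a::ab_group_add \<Rightarrow> 'l) \<Rightarrow> 'a list \<Rightarrow> nat \<Rightarrow> bool" where
  "liftable_at L xs i \<longleftrightarrow>
     (\<forall>h. L h = L (with_sum xs ! i) \<longrightarrow>
        (\<exists>ys. map L (with_sum ys) = map L (with_sum xs) \<and> with_sum ys ! i = h))"

lemma Zset_Suc: "Zset (Suc n) = with_sum ` {xs. length xs = n}"
proof (intro set_eqI iffI)
  fix gs :: "'a list"
  assume "gs \<in> Zset (Suc n)"
  then have len: "length gs = Suc n" and "sum_list (take n gs) = gs ! n"
    by (simp_all add: Zset_def)
  then have "gs = with_sum (take n gs)"
    by (metis lessI take_Suc_conv_app_nth take_all_iff order_refl)
  then show "gs \<in> with_sum ` {xs. length xs = n}"
    using len by (intro image_eqI) auto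
qed (auto simp: Zset_def nth_append)

lemma m_friendly_Suc_iff:
  "m_friendly (Suc n) L \<longleftrightarrow> (\<forall>xs. length xs = n \<longrightarrow> (\<forall>i\<le>n. liftable_at L xs i))"
proof -
  have coordinate: "(\<lambda>gs. gs ! i) ` {gs \<in> Zset (Suc n). map L gs = map L (with_sum xs)}
          = L -` {map L (with_sum xs) ! i} \<longleftrightarrow> liftable_at L xs i"
    if "length xs = n" "i \<le> n" for xs i
  proof -
    have "{gs \<in> Zset (Suc n). map L gs = map L (with_sum xs)} =
        with_sum ` {ys. map L (with_sum ys) = map L (with_sum xs)}"
      using that by (auto simp: Zset_Suc dest: map_eq_imp_length_eq)
    then have fiber: "(\<lambda>gs. gs ! i) ` {gs \<in> Zset (Suc n). map L gs = map L (with_sum xs)} =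
        (\<lambda>ys. with_sum ys ! i) ` {ys. map L (with_sum ys) = map L (with_sum xs)}"
      by (simp add: image_image)
    have label: "map L (with_sum xs) ! i = L (with_sum xs ! i)"
      using that by (simp add: nth_append)
    have "(\<lambda>ys. with_sum ys ! i) ` {ys. map L (with_sum ys) = map L (with_sum xs)}
        \<subseteq> L -` {L (with_sum xs ! i)}"
      using that by (auto simp: nth_append dest: map_eq_imp_length_eq) (metis nth_map)
    moreover have "liftable_at L xs i \<longleftrightarrow> L -` {L (with_sum xs ! i)}
        \<subseteq> (\<lambda>ys. with_sum ys ! i) ` {ys. map L (with_sum ys) = map L (with_sum xs)}"
      unfolding liftable_at_def by blast
    ultimately show ?thesis
      unfolding fiber label by blast
  qed
  have "m_friendly (Suc n) L \<longleftrightarrow> (\<forall>xs. length xs = n \<longrightarrow> (\<forall>i<Suc n.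
      (\<lambda>gs. gs ! i) ` {gs \<in> Zset (Suc n). map L gs = map L (with_sum xs)}
        = L -` {map L (with_sum xs) ! i}))"
    by (simp add: m_friendly_def Zset_Suc Ltilde_def)
  also have "\<dots> \<longleftrightarrow> (\<forall>xs. length xs = n \<longrightarrow> (\<forall>i\<le>n. liftable_at L xs i))"
    by (simp only: less_Suc_eq_le coordinate cong: imp_cong)
  finally show ?thesis .
qed

lemma m_friendly_3D:
  assumes "m_friendly 3 L" "i \<le> 2" "L h = L ([a, b, a + b] ! i)"
  shows "\<exists>a' b'. L a' = L a \<and> L b' = L b \<and> L (a' + b') = L (a + b) \<and> [a', b', a' + b'] ! i = h"
proof -
  have "liftable_at L [a, b] i"
    using assms(1,2) by (simp add: numeral_3_eq_3 m_friendly_Suc_iff)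
  with assms(3) have "\<exists>ys. map L ys = [L a, L b] \<and> L (sum_list ys) = L (a + b) \<and> with_sum ys ! i = h"
    by (simp add: liftable_at_def)
  then show ?thesis
    by (fastforce simp: map_eq_Cons_conv)
qed

lemma liftable_at_singleton: "i \<le> 1 \<Longrightarrow> liftable_at L [x] i"
  unfolding liftable_at_def
proof (intro allI impI)
  fix h
  assume "i \<le> 1" "L h = L (with_sum [x] ! i)"
  then show "\<exists>ys. map L (with_sum ys) = map L (with_sum [x]) \<and> with_sum ys ! i = h"
    by (intro exI[of _ "[h]"]) (auto simp: nth_Cons')
qed

lemma liftable_at_length_iff:
  "liftable_at L xs (length xs) \<longleftrightarrow>
     (\<forall>h. L h = L (sum_list xs) \<longrightarrow> (\<exists>ys. map L ys = map L xs \<and> sum_list ys = h))"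
proof -
  have last_entry: "with_sum ys ! length xs = sum_list ys" if "map L ys = map L xs" for ys
    by (metis map_eq_imp_length_eq nth_append_length that)
  have "map L (with_sum ys) = map L (with_sum xs) \<and> with_sum ys ! length xs = h \<longleftrightarrow>
      map L ys = map L xs \<and> sum_list ys = h \<and> L h = L (sum_list xs)" for ys h
    by (auto simp: last_entry)
  then show ?thesis
    unfolding liftable_at_def by auto
qed

lemma liftable_at_snoc_coord:
  assumes friendly: "m_friendly 3 L" and i: "i < length xs" and lift: "liftable_at L xs i"
  shows "liftable_at L (xs @ [b]) i"
  unfolding liftable_at_def
proof (intro allI impI)
  fix h
  assume "L h = L (with_sum (xs @ [b]) ! i)"
  with i lift obtain ys where ys: "map L (with_sum ys) = map L (with_sum xs)" "with_sum ys ! i = h"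
    by (auto simp: liftable_at_def nth_append)
  then have len: "length ys = length xs" and "L (sum_list ys) = L (sum_list xs)"
    using map_eq_imp_length_eq by fastforce+
  then obtain b' where "L b' = L b" "L (sum_list ys + b') = L (sum_list xs + b)"
    using m_friendly_3D[OF friendly, of 0 "sum_list ys" "sum_list xs" b] by auto
  then show "\<exists>zs. map L (with_sum zs) = map L (with_sum (xs @ [b])) \<and> with_sum zs ! i = h"
    using ys len i by (intro exI[of _ "ys @ [b']"]) (auto simp: nth_append)
qed

lemma liftable_at_snoc_last:
  assumes friendly: "m_friendly 3 L" and lift: "liftable_at L xs (length xs)"
  shows "liftable_at L (xs @ [b]) (length xs)"
  unfolding liftable_at_def
proof (intro allI impI)
  fix h
  assume "L h = L (with_sum (xs @ [b]) ! length xs)"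
  then obtain a' where a': "L a' = L (sum_list xs)" "L (a' + h) = L (sum_list xs + b)"
    using m_friendly_3D[OF friendly, of 1 h "sum_list xs" b] by auto
  with lift obtain ys where ys: "map L ys = map L xs" "sum_list ys = a'"
    by (auto simp: liftable_at_length_iff)
  then have len: "length ys = length xs"
    using map_eq_imp_length_eq by blast
  show "\<exists>zs. map L (with_sum zs) = map L (with_sum (xs @ [b])) \<and> with_sum zs ! length xs = h"
    using ys len a' \<open>L h = _\<close> by (intro exI[of _ "ys @ [h]"]) (auto simp: nth_append)
qed

lemma liftable_at_snoc_sum:
  assumes friendly: "m_friendly 3 L" and lift: "liftable_at L xs (length xs)"
  shows "liftable_at L (xs @ [b]) (Suc (length xs))"
  unfolding liftable_at_def
proof (intro allI impI)
  fix h
  assume "L h = L (with_sum (xs @ [b]) ! Suc (length xs))"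
  then obtain a' b' where ab': "L a' = L (sum_list xs)" "L b' = L b" "a' + b' = h"
    using m_friendly_3D[OF friendly, of 2 h "sum_list xs" b] by (auto simp: nth_append)
  with lift obtain ys where ys: "map L ys = map L xs" "sum_list ys = a'"
    by (auto simp: liftable_at_length_iff)
  then have len: "length ys = length xs"
    using map_eq_imp_length_eq by blast
  show "\<exists>zs. map L (with_sum zs) = map L (with_sum (xs @ [b])) \<and> with_sum zs ! Suc (length xs) = h"
    using ys len ab' \<open>L h = _\<close> by (intro exI[of _ "ys @ [b']"]) (auto simp: nth_append)
qed

lemma m_friendly_3_liftable_at:
  assumes friendly: "m_friendly 3 L"
  shows "xs \<noteq> [] \<Longrightarrow> i \<le> length xs \<Longrightarrow> liftable_at L xs i"
proof (induction xs arbitrary: i rule: rev_induct)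
  case Nil
  then show ?case by simp
next
  case (snoc b xs)
  show ?case
  proof (cases "xs = []")
    case True
    then show ?thesis
      using snoc.prems by (simp add: liftable_at_singleton)
  next
    case False
    then consider "i < length xs" | "i = length xs" | "i = Suc (length xs)"
      using snoc.prems by fastforce
    then show ?thesis
      using snoc.IH[OF False] by cases
        (simp_all add: friendly liftable_at_snoc_coord liftable_at_snoc_last liftable_at_snoc_sum)
  qed
qed

theorem lemma3p5:
  fixes L :: "'a::{ab_group_add, finite} \<Rightarrow> 'l::finite"
  assumes "m_friendly 3 L"
  shows "friendly L"
  unfolding friendly_def
proof (intro allI impI)
  fix m :: nat
  assume "m \<ge> 3"
  then obtain n where "m = Suc n" and "n \<ge> 2"
    by (cases m) auto
  show "m_friendly m L"
    unfolding \<open>m = Suc n\<close> m_friendly_Suc_iff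
  proof (intro allI impI)
    fix xs :: "'a list" and i :: nat
    assume "length xs = n" "i \<le> n"
    with \<open>n \<ge> 2\<close> show "liftable_at L xs i"
      by (intro m_friendly_3_liftable_at[OF assms]) auto
  qed
qed

end
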